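(* Fix $\beta \in (0,1)$ and $r \ge 0$ with $r < \beta$. Consider the following normal model. Let $m = \lfloor n^{1-\beta}\rfloor$, and let $\mathscr{F}\subset[n]$ be a uniformly random subset of size $m$. Set $\mu_i = \sqrt{2r\log n}$ for $i\in\mathscr{F}$ and $\mu_i=0$ otherwise. Let $X_i \sim \mathcal{N}(\mu_i,1)$ be independent, and test the null hypotheses $\mu_i = 0$. Then for any natural multiple testing procedure $\mathscr{R}$, $$\liminf_{n\to\infty}\big(\mathrm{FDR}(\mathscr{R}) + \mathrm{FNR}(\mathscr{R})\big) \ge 1.$$
   Context: A multiple testing procedure $\mathscr{R}$ maps the data $\mathbf{X}=(X_1,\dots,X_n)$ to a set $\mathscr{R}(\mathbf{X})\subset[n]$ of rejected hypotheses. For a rejection set $\mathscr{R}$: - $\mathrm{FDP}(\mathscr{R}) = |\mathscr{R}\setminus\mathscr{F}|/|\mathscr{R}|$, - $\mathrm{FNP}(\mathscr{R}) = |\mathscr{F}\setminus\mathscr{R}|/|\mathscr{F}|$, with $0/0=0$. Further, $\mathrm{FDR}=\mathbb{E}[\mathrm{FDP}(\mathscr{R}(\mathbf{X}))]$ and $\mathrm{FNR}=\mathbb{E}[\mathrm{FNP}(\mathscr{R}(\mathbf{X}))]$, and the risk is $\mathrm{FDR}+\mathrm{FNR}$. A procedure is natural if it has all three of the following properties: - it is permutation invariant, i.e., invariant under reordering of its $n$ input variables; - it is a threshold procedure, i.e., $\mathscr{R}(\mathbf{X})=\{i : X_i \ge \tau(\mathbf{X})\}$ for some function $\tau$; - it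 is monotonic, i.e., for any $i\in\mathscr{R}(\mathbf{X})$, increasing $X_i$ leaves $\mathscr{R}$ unchanged. *)

theory Defs
  imports "HOL-Probability.Probability"
begin

definition FDP :: "nat set \<Rightarrow> nat set \<Rightarrow> real" where
  "FDP R F = (if R = {} then 0 else real (card (R - F)) / real (card R))"

definition FNP :: "nat set \<Rightarrow> nat set \<Rightarrow> real" where
  "FNP R F = (if F = {} then 0 else real (card (F - R)) / real (card F))"

text \<open>A procedure for sample size n maps data x in R^n (encoded as extensional
  functions on {..<n}) to a set of rejected indices.  Natural procedures:\<close>
definition natural_proc :: "nat \<Rightarrow> ((nat \<Rightarrow> real) \<Rightarrow> nat set) \<Rightarrow> bool" where
  "natural_proc n R \<longleftrightarrow>
     (\<forall>x \<in> {..<n} \<rightarrow>\<^sub>E (UNIV::real set). \<forall>\<sigma>. \<sigma> permutes {..<n} \<longrightarrow>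
         R (x \<circ> \<sigma>) = {i. i < n \<and> \<sigma> i \<in> R x})
   \<and> (\<exists>\<tau> :: (nat \<Rightarrow> real) \<Rightarrow> real. \<forall>x \<in> {..<n} \<rightarrow>\<^sub>E (UNIV::real set).
         R x = {i. i < n \<and> \<tau> x \<le> x i})
   \<and> (\<forall>x \<in> {..<n} \<rightarrow>\<^sub>E (UNIV::real set). \<forall>i \<in> R x. \<forall>t. x i \<le> t \<longrightarrow>
         R (x(i := t)) = R x)"

definition m_of :: "real \<Rightarrow> nat \<Rightarrow> nat" where
  "m_of \<beta> n = nat \<lfloor>real n powr (1 - \<beta>)\<rfloor>"

definition support_dist :: "real \<Rightarrow> nat \<Rightarrow> nat set pmf" where
  "support_dist \<beta> n = pmf_of_set {F. F \<subseteq> {..<n} \<and> card F = m_of \<beta> n}"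

definition mu :: "real \<Rightarrow> nat \<Rightarrow> nat set \<Rightarrow> nat \<Rightarrow> real" where
  "mu r n F i = (if i \<in> F then sqrt (2 * r * ln (real n)) else 0)"

definition data_dist :: "real \<Rightarrow> nat \<Rightarrow> nat set \<Rightarrow> (nat \<Rightarrow> real) measure" where
  "data_dist r n F = PiM {..<n} (\<lambda>i. density lborel (normal_density (mu r n F i) 1))"

definition FDR :: "real \<Rightarrow> real \<Rightarrow> nat \<Rightarrow> ((nat \<Rightarrow> real) \<Rightarrow> nat set) \<Rightarrow> real" where
  "FDR \<beta> r n R = measure_pmf.expectation (support_dist \<beta> n)
      (\<lambda>F. \<integral>x. FDP (R x) F \<partial>data_dist r n F)"

definition FNR :: "real \<Rightarrow> real \<Rightarrow> nat \<Rightarrow> ((nat \<Rightarrow> real) \<Rightarrow> nat set) \<Rightarrow> real" where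
  "FNR \<beta> r n R = measure_pmf.expectation (support_dist \<beta> n)
      (\<lambda>F. \<integral>x. FNP (R x) F \<partial>data_dist r n F)"

end

theory Submission
  imports Defs "HOL-Real_Asymp.Real_Asymp"
begin

text \<open>
  Fix \<open>r < c < \<beta>\<close> and the
  oracle cut-off \<open>t\<^sub>0 = \<surd>(2 c log n)\<close>.  If the data-dependent threshold \<open>\<tau>\<close> is at least
  \<open>t\<^sub>0\<close>, every rejected signal exceeds \<open>t\<^sub>0\<close>, so \<open>FNP\<close> is at least one minus the fraction
  of signals above \<open>t\<^sub>0\<close>, whose mean \<open>P(N(\<surd>(2 r log n),1) \<ge> t\<^sub>0)\<close> is \<open>O(1/log n)\<close> by
  Chebyshev.  If \<open>\<tau> < t\<^sub>0\<close>, all \<open>V\<close> nulls above \<open>t\<^sub>0\<close> are rejected, so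
  \<open>FDP \<ge> V/(V + m)\<close>; here \<open>V\<close> is binomial with mean \<open>n^(1 - c - o(1))\<close>, much larger
  than \<open>m \<approx> n^(1 - \<beta>)\<close>, and Chebyshev's inequality for \<open>V\<close> gives \<open>E[m/(V + m)] \<rightarrow> 0\<close>.
\<close>

lemma natural_proc_threshold:
  "natural_proc n R \<Longrightarrow> \<exists>\<tau>. \<forall>x \<in> {..<n} \<rightarrow>\<^sub>E (UNIV::real set). R x = {i. i < n \<and> \<tau> x \<le> x i}"
  unfolding natural_proc_def by (rule conjunct1[OF conjunct2])

lemma FDP_nonneg: "0 \<le> FDP R F"
  by (simp add: FDP_def)

lemma FDP_le_1: "FDP R F \<le> 1"
proof (cases "finite R")
  case True
  then have "card (R - F) \<le> card R" by (intro card_mono) auto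
  then show ?thesis by (auto simp: FDP_def divide_le_eq_1)
qed (simp add: FDP_def)

lemma FNP_nonneg: "0 \<le> FNP R F"
  by (simp add: FNP_def)

lemma FNP_le_1: "FNP R F \<le> 1"
proof (cases "finite F")
  case True
  then have "card (F - R) \<le> card F" by (intro card_mono) auto
  then show ?thesis by (auto simp: FNP_def divide_le_eq_1)
qed (simp add: FNP_def)

lemma FDP_add_FNP_threshold_ge:
  fixes x :: "nat \<Rightarrow> real" and \<tau> t :: real
  assumes F: "F \<subseteq> {..<n}" "F \<noteq> {}"
  defines "R \<equiv> {i. i < n \<and> \<tau> \<le> x i}"
  shows "1 - real (card {i\<in>F. t \<le> x i}) / real (card F)
           - real (card F) / (real (card {i\<in>{..<n} - F. t \<le> x i}) + real (card F))
         \<le> FDP R F + FNP R F"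
    (is "1 - real ?S / real ?m - real ?m / (real ?V + real ?m) \<le> _")
proof -
  have finF: "finite F" using F finite_subset by blast
  have m0: "real ?m > 0" using finF F by (simp add: card_gt_0_iff)
  have errors_nonneg: "real ?S / real ?m \<ge> 0" "real ?m / (real ?V + real ?m) \<ge> 0" by auto
  show ?thesis
  proof (cases "t \<le> \<tau>")
    case True
    have "card (F \<inter> R) \<le> ?S"
      by (rule card_mono) (use finF True in \<open>auto simp: R_def\<close>)
    then have "1 - real ?S / real ?m \<le> 1 - real (card (F \<inter> R)) / real ?m"
      using m0 by (simp add: divide_right_mono)
    also have "\<dots> = real (card (F - R)) / real ?m"
      using card_Int_Diff[OF finF, of R] m0 by (simp add: field_simps)
    also have "\<dots> = FNP R F" using F by (simp add: FNP_def)
    finally show ?thesis using FDP_nonneg[of R F] errors_nonneg by linarith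
  next
    case False
    have nulls_rejected: "{i\<in>{..<n} - F. t \<le> x i} \<subseteq> R - F"
      using False by (auto simp: R_def)
    have "1 - real ?m / (real ?V + real ?m) \<le> FDP R F"
    proof (cases "R = {}")
      case True
      then have "{i\<in>{..<n} - F. t \<le> x i} = {}" using nulls_rejected by blast
      then have V0: "?V = 0" by (simp only: card.empty)
      show ?thesis unfolding V0 using m0 FDP_nonneg[of R F] by simp
    next
      case R_ne: False
      define a where "a = card (R - F)"
      have finR: "finite R" by (simp add: R_def)
      have "card R \<le> card ((R - F) \<union> F)" by (rule card_mono) (use finF finR in auto)
      also have "\<dots> \<le> a + ?m" unfolding a_def by (rule card_Un_le)
      finally have card_R: "card R \<le> a + ?m" .
      have "1 - real ?m / (real ?V + real ?m) = real ?V / (real ?V + real ?m)"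
        using m0 by (simp add: field_simps)
      also have "\<dots> \<le> real a / (real a + real ?m)"
        using card_mono[OF _ nulls_rejected] finR m0 by (simp add: a_def field_simps)
      also have "\<dots> \<le> real a / real (card R)"
      proof (cases "a = 0")
        case False
        have "card R > 0" using R_ne finR by (simp add: card_gt_0_iff)
        then show ?thesis using card_R False by (intro divide_left_mono) auto
      qed simp
      also have "\<dots> = FDP R F" using R_ne by (simp add: FDP_def a_def)
      finally show ?thesis .
    qed
    then show ?thesis using FNP_nonneg[of R F] errors_nonneg by linarith
  qed
qed

lemma (in prob_space) integrable_indicator_event:
  "A \<in> events \<Longrightarrow> integrable M (indicator A :: 'a \<Rightarrow> real)"
  by (simp add: less_top[symmetric])

lemma sum_indicator_sq:
  "(\<Sum>i\<in>N. indicator (A i) x :: real)\<^sup>2 = (\<Sum>i\<in>N. \<Sum>j\<in>N. indicator (A i \<inter> A j) x)"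
  unfolding power2_eq_square sum_product indicator_inter_arith by simp

lemma (in prob_space) expectation_sum_indicator:
  assumes "\<And>i. i \<in> N \<Longrightarrow> A i \<in> events"
  shows "expectation (\<lambda>x. \<Sum>i\<in>N. indicator (A i) x) = (\<Sum>i\<in>N. prob (A i))"
  using assms integrable_indicator_event
  by (simp add: Bochner_Integration.integral_sum sets.Int_space_eq2)

lemma (in prob_space) integrable_sum_indicator_sq:
  assumes "\<And>i. i \<in> N \<Longrightarrow> A i \<in> events"
  shows "integrable M (\<lambda>x. (\<Sum>i\<in>N. indicator (A i) x :: real)\<^sup>2)"
  unfolding sum_indicator_sq using assms integrable_indicator_event by auto

lemma (in prob_space) variance_sum_indicator_le:
  assumes fin: "finite N" and ev: "\<And>i. i \<in> N \<Longrightarrow> A i \<in> events"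
    and pA: "\<And>i. i \<in> N \<Longrightarrow> prob (A i) = p"
    and pAA: "\<And>i j. i \<in> N \<Longrightarrow> j \<in> N \<Longrightarrow> i \<noteq> j \<Longrightarrow> prob (A i \<inter> A j) = p * p"
  shows "variance (\<lambda>x. \<Sum>i\<in>N. indicator (A i) x) \<le> real (card N) * p"
proof -
  define V where "V = (\<lambda>x. (\<Sum>i\<in>N. indicator (A i) x :: real))"
  define k where "k = real (card N)"
  have "expectation V = k * p"
    unfolding V_def k_def using expectation_sum_indicator[of N A] ev pA by simp
  moreover have "expectation (\<lambda>x. (V x)\<^sup>2) = (\<Sum>i\<in>N. \<Sum>j\<in>N. prob (A i \<inter> A j))"
    unfolding V_def sum_indicator_sq using ev integrable_indicator_event
    by (simp add: Bochner_Integration.integral_sum sets.Int_space_eq2)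
  moreover have "\<dots> \<le> (\<Sum>i\<in>N. \<Sum>j\<in>N. p * p + (if i = j then p else 0))"
    by (intro sum_mono) (use pA pAA in auto)
  moreover have "\<dots> = k * (k * (p * p) + p)"
    using fin unfolding k_def by (simp add: sum.distrib)
  moreover have "integrable M V"
    unfolding V_def using ev integrable_indicator_event by auto
  moreover have "integrable M (\<lambda>x. (V x)\<^sup>2)"
    unfolding V_def using integrable_sum_indicator_sq[of N A] ev by simp
  ultimately have "variance V \<le> k * p"
    by (subst variance_eq) (auto simp: power2_eq_square algebra_simps)
  then show ?thesis unfolding V_def k_def .
qed

lemma (in prob_space) expectation_div_sum_indicator_add_le:
  assumes fin: "finite N" and ne: "N \<noteq> {}" and ev: "\<And>i. i \<in> N \<Longrightarrow> A i \<in> events"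
    and pA: "\<And>i. i \<in> N \<Longrightarrow> prob (A i) = p"
    and pAA: "\<And>i j. i \<in> N \<Longrightarrow> j \<in> N \<Longrightarrow> i \<noteq> j \<Longrightarrow> prob (A i \<inter> A j) = p * p"
    and p: "p > 0" and c: "c > 0"
  shows "expectation (\<lambda>x. c / ((\<Sum>i\<in>N. indicator (A i) x) + c)) \<le> (4 + 2 * c) / (real (card N) * p)"
proof -
  define V where "V = (\<lambda>x. (\<Sum>i\<in>N. indicator (A i) x :: real))"
  define k where "k = real (card N)"
  have kp: "k * p > 0" using fin ne p by (simp add: k_def card_gt_0_iff)
  have V_nonneg: "V x \<ge> 0" for x unfolding V_def by (intro sum_nonneg) auto
  have EV: "expectation V = k * p"
    unfolding V_def k_def using expectation_sum_indicator[of N A] ev pA by simp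
  define B where "B = {x\<in>space M. \<bar>V x - expectation V\<bar> \<ge> k * p / 2}"
  have B_ev: "B \<in> events" unfolding B_def V_def using ev by measurable
  have "prob B \<le> variance V / (k * p / 2)\<^sup>2"
    unfolding B_def V_def using ev kp integrable_sum_indicator_sq[of N A]
    by (intro Chebyshev_inequality) auto
  also have "\<dots> \<le> (k * p) / (k * p / 2)\<^sup>2"
    using variance_sum_indicator_le[OF fin ev pA pAA] kp
    unfolding V_def k_def by (intro divide_right_mono) auto
  also have "\<dots> = 4 / (k * p)" using kp by (simp add: field_simps power2_eq_square)
  finally have PB: "prob B \<le> 4 / (k * p)" .
  have pointwise: "c / (V x + c) \<le> indicator B x + 2 * c / (k * p)" if x: "x \<in> space M" for x
  proof (cases "x \<in> B")
    case True
    have "c / (V x + c) \<le> 1" using c V_nonneg[of x] by simp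
    moreover have "2 * c / (k * p) \<ge> 0" using c kp by simp
    ultimately show ?thesis using True by simp
  next
    case False
    then have "V x > k * p / 2" using x EV unfolding B_def by (auto simp: abs_if split: if_splits)
    then have "c / (V x + c) \<le> c / (k * p / 2)" using c kp by (intro divide_left_mono) auto
    also have "\<dots> = 2 * c / (k * p)" by simp
    finally show ?thesis using False by simp
  qed
  have "integrable M (\<lambda>x. c / (V x + c))"
  proof (intro integrable_const_bound[where B=1] AE_I2)
    show "norm (c / (V x + c)) \<le> 1" for x using c V_nonneg[of x] by simp
  qed (use ev in \<open>auto simp: V_def\<close>)
  then have "expectation (\<lambda>x. c / (V x + c)) \<le> expectation (\<lambda>x. indicator B x + 2 * c / (k * p))"
    by (intro integral_mono) (use pointwise integrable_indicator_event[OF B_ev] in auto)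
  also have "\<dots> = prob B + 2 * c / (k * p)"
    using B_ev integrable_indicator_event[OF B_ev] by (simp add: sets.Int_space_eq2 prob_space)
  also have "\<dots> \<le> (4 + 2 * c) / (k * p)" using PB by (simp add: add_divide_distrib)
  finally show ?thesis unfolding V_def k_def .
qed

lemma normal_tail_le_inverse_square:
  assumes "d > 0"
  shows "measure (density lborel (normal_density \<mu> 1)) {x. \<mu> + d \<le> x} \<le> 1 / d\<^sup>2"
proof -
  define N where "N = density lborel (normal_density \<mu> 1)"
  interpret N: prob_space N unfolding N_def by (rule prob_space_normal_density) simp
  have second_moment: "has_bochner_integral lborel (\<lambda>x. normal_density \<mu> 1 x * (x - \<mu>)\<^sup>2) 1"
    using normal_moment_even[where k=1 and \<mu>=\<mu> and \<sigma>=1] by (simp add: power2_eq_square)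
  have int: "integrable N (\<lambda>x. (x - \<mu>)\<^sup>2)"
    unfolding N_def using second_moment
    by (subst integrable_density) (auto simp: has_bochner_integral_iff)
  have "(\<integral>x. (x - \<mu>)\<^sup>2 \<partial>N) = 1"
    unfolding N_def using second_moment
    by (subst integral_density) (auto simp: has_bochner_integral_iff)
  moreover have "measure N {x\<in>space N. d\<^sup>2 \<le> (x - \<mu>)\<^sup>2} \<le> (\<integral>x. (x - \<mu>)\<^sup>2 \<partial>N) / d\<^sup>2"
    by (rule integral_Markov_inequality_measure[OF int, where A="space N"]) (use assms in auto)
  ultimately have "measure N {x\<in>space N. d\<^sup>2 \<le> (x - \<mu>)\<^sup>2} \<le> 1 / d\<^sup>2" by simp
  moreover have "measure N {x. \<mu> + d \<le> x} \<le> measure N {x\<in>space N. d\<^sup>2 \<le> (x - \<mu>)\<^sup>2}"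
    using assms by (intro N.finite_measure_mono) (auto simp: N_def intro!: power_mono)
  ultimately show ?thesis unfolding N_def by simp
qed

lemma normal_density_le_std_normal_tail:
  assumes "t \<ge> 0"
  shows "normal_density 0 1 (t + 1) \<le> measure (density lborel (normal_density 0 1)) {x. t \<le> x}"
proof -
  define N where "N = density lborel (normal_density 0 1)"
  interpret N: prob_space N unfolding N_def by (rule prob_space_normal_density) simp
  have "ennreal (normal_density 0 1 (t + 1))
          = (\<integral>\<^sup>+ x. ennreal (normal_density 0 1 (t + 1)) * indicator {t..t+1} x \<partial>lborel)"
    by (simp add: nn_integral_cmult_indicator)
  also have "\<dots> \<le> (\<integral>\<^sup>+ x. ennreal (normal_density 0 1 x) * indicator {x. t \<le> x} x \<partial>lborel)"
  proof (intro nn_integral_mono)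
    fix x
    have "normal_density 0 1 (t + 1) \<le> normal_density 0 1 x" if "x \<in> {t..t+1}"
    proof -
      have "x\<^sup>2 \<le> (t + 1)\<^sup>2" using that assms by (auto intro!: power_mono)
      then show ?thesis by (auto simp: normal_density_def intro!: divide_right_mono)
    qed
    then show "ennreal (normal_density 0 1 (t + 1)) * indicator {t..t+1} x
                 \<le> ennreal (normal_density 0 1 x) * indicator {x. t \<le> x} x"
      by (auto simp: indicator_def)
  qed
  also have "\<dots> = emeasure N {x. t \<le> x}"
    unfolding N_def by (subst emeasure_density) auto
  finally show ?thesis unfolding N_def[symmetric] N.emeasure_eq_measure by simp
qed

lemma std_normal_density_add_1:
  "normal_density 0 1 (t + 1) = exp (- (t\<^sup>2 / 2 + t + 1 / 2)) / sqrt (2 * pi)"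
proof -
  have "- (t + 1)\<^sup>2 / 2 = - (t\<^sup>2 / 2 + t + 1 / 2)" by (simp add: power2_eq_square field_simps)
  then show ?thesis by (simp add: normal_density_def)
qed

lemma product_prob_space_data_dist:
  "product_prob_space (\<lambda>i. density lborel (normal_density (mu r n F i) 1))"
  unfolding product_prob_space_def product_prob_space_axioms_def product_sigma_finite_def
  by (auto intro!: prob_space_normal_density prob_space_imp_sigma_finite)

lemma prob_space_data_dist: "prob_space (data_dist r n F)"
proof -
  interpret product_prob_space "\<lambda>i. density lborel (normal_density (mu r n F i) 1)" "{..<n}"
    by (rule product_prob_space_data_dist)
  show ?thesis unfolding data_dist_def
    by (rule prob_space_PiM) (auto intro: prob_space_normal_density)
qed

lemma sets_data_dist: "sets (data_dist r n F) = sets (PiM {..<n} (\<lambda>_. borel :: real measure))"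
  unfolding data_dist_def by (intro sets_PiM_cong) auto

lemma space_data_dist: "space (data_dist r n F) = {..<n} \<rightarrow>\<^sub>E (UNIV :: real set)"
  unfolding data_dist_def by (simp add: space_PiM)

lemma prob_data_dist_coord_ge:
  assumes "i < n"
  shows "measure (data_dist r n F) {x\<in>space (data_dist r n F). t \<le> x i}
       = measure (density lborel (normal_density (mu r n F i) 1)) {x. t \<le> x}"
proof -
  interpret product_prob_space "\<lambda>i. density lborel (normal_density (mu r n F i) 1)" "{..<n}"
    by (rule product_prob_space_data_dist)
  show ?thesis
    unfolding data_dist_def measure_def using emeasure_PiM_Collect_single[of i "{x. t \<le> x}"] assms
    by simp
qed

lemma prob_data_dist_two_coords_ge:
  fixes r t :: real and F :: "nat set"
  assumes "i < n" "j < n" "i \<noteq> j"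
  defines "A \<equiv> \<lambda>k. {x\<in>space (data_dist r n F). t \<le> x k}"
  shows "measure (data_dist r n F) (A i \<inter> A j)
       = measure (density lborel (normal_density (mu r n F i) 1)) {x. t \<le> x}
       * measure (density lborel (normal_density (mu r n F j) 1)) {x. t \<le> x}"
proof -
  interpret product_prob_space "\<lambda>i. density lborel (normal_density (mu r n F i) 1)" "{..<n}"
    by (rule product_prob_space_data_dist)
  have AA: "A i \<inter> A j = {x\<in>space (data_dist r n F). \<forall>k\<in>{i, j}. x k \<in> {x. t \<le> x}}"
    by (auto simp: A_def)
  have "emeasure (data_dist r n F) (A i \<inter> A j)
       = (\<Prod>k\<in>{i, j}. emeasure (density lborel (normal_density (mu r n F k) 1)) {x. t \<le> x})"
    unfolding AA unfolding data_dist_def using assms(1-3) by (intro emeasure_PiM_Collect) auto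
  also have "\<dots> = ennreal (measure (density lborel (normal_density (mu r n F i) 1)) {x. t \<le> x}
                        * measure (density lborel (normal_density (mu r n F j) 1)) {x. t \<le> x})"
    using assms(1-3) by (simp add: M.emeasure_eq_measure ennreal_mult)
  finally show ?thesis by (simp add: measure_def)
qed

lemma (in prob_space) expectation_FDP_add_FNP_ge:
  fixes X :: "'a \<Rightarrow> nat \<Rightarrow> real"
  assumes F: "F \<subseteq> {..<n}" "F \<noteq> {}" and nulls: "{..<n} - F \<noteq> {}"
    and ev: "\<And>i. i < n \<Longrightarrow> {x\<in>space M. t \<le> X x i} \<in> events"
    and prob_signal: "\<And>i. i \<in> F \<Longrightarrow> prob {x\<in>space M. t \<le> X x i} = q"
    and prob_null: "\<And>i. i \<in> {..<n} - F \<Longrightarrow> prob {x\<in>space M. t \<le> X x i} = p"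
    and prob_null_pair: "\<And>i j. i \<in> {..<n} - F \<Longrightarrow> j \<in> {..<n} - F \<Longrightarrow> i \<noteq> j \<Longrightarrow>
      prob ({x\<in>space M. t \<le> X x i} \<inter> {x\<in>space M. t \<le> X x j}) = p * p"
    and p_pos: "p > 0"
    and threshold: "\<And>x. x \<in> space M \<Longrightarrow> R x = {i. i < n \<and> \<tau> x \<le> X x i}"
    and meas: "R \<in> measurable M (count_space UNIV)"
  shows "1 - q - (4 + 2 * real (card F)) / (real (card ({..<n} - F)) * p)
         \<le> expectation (\<lambda>x. FDP (R x) F) + expectation (\<lambda>x. FNP (R x) F)"
proof -
  define m where "m = real (card F)"
  define N where "N = {..<n} - F"
  define A where "A = (\<lambda>i. {x\<in>space M. t \<le> X x i})"
  have finF: "finite F" using F finite_subset by blast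
  have m_pos: "m > 0" using finF F by (simp add: m_def card_gt_0_iff)
  have N: "N \<subseteq> {..<n}" "finite N" unfolding N_def by auto
  have A_ev: "\<And>i. i \<in> F \<Longrightarrow> A i \<in> events" "\<And>i. i \<in> N \<Longrightarrow> A i \<in> events"
    using ev F N unfolding A_def by auto
  have int_bounded: "integrable M (\<lambda>x. g (R x))" if "\<And>B. \<bar>g B\<bar> \<le> 1" for g :: "nat set \<Rightarrow> real"
    using that measurable_compose[OF meas, of g] by (intro integrable_const_bound[where B=1] AE_I2) auto
  have int_FDP: "integrable M (\<lambda>x. FDP (R x) F)"
    using FDP_nonneg FDP_le_1 by (intro int_bounded) (simp add: abs_le_iff)
  have int_FNP: "integrable M (\<lambda>x. FNP (R x) F)"
    using FNP_nonneg FNP_le_1 by (intro int_bounded) (simp add: abs_le_iff)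
  define S where "S = (\<lambda>x. (\<Sum>i\<in>F. indicator (A i) x) / m)"
  define C where "C = (\<lambda>x. m / ((\<Sum>i\<in>N. indicator (A i) x) + m))"
  have "expectation S = q"
    unfolding S_def using expectation_sum_indicator[of F A] A_ev prob_signal m_pos
    by (simp add: A_def m_def)
  moreover have "expectation C \<le> (4 + 2 * m) / (real (card N) * p)"
    unfolding C_def using N nulls A_ev prob_null prob_null_pair p_pos m_pos
    by (intro expectation_div_sum_indicator_add_le) (auto simp: A_def N_def)
  moreover have int_S: "integrable M S"
    unfolding S_def using A_ev integrable_indicator_event by auto
  moreover have int_C: "integrable M C"
  proof (intro integrable_const_bound[where B=1] AE_I2)
    fix x
    have "0 \<le> (\<Sum>i\<in>N. indicator (A i) x :: real)" by (intro sum_nonneg) auto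
    then show "norm (C x) \<le> 1" using m_pos by (simp add: C_def)
  qed (use A_ev in \<open>auto simp: C_def\<close>)
  ultimately have "1 - q - (4 + 2 * m) / (real (card N) * p) \<le> expectation (\<lambda>x. 1 - S x - C x)"
    by (simp add: prob_space)
  also have "\<dots> \<le> expectation (\<lambda>x. FDP (R x) F + FNP (R x) F)"
  proof (intro integral_mono)
    fix x assume x: "x \<in> space M"
    have count_A: "(\<Sum>i\<in>I. indicator (A i) x) = real (card {i\<in>I. t \<le> X x i})" if "finite I" for I
      using that x by (simp add: A_def indicator_def Int_def)
    show "1 - S x - C x \<le> FDP (R x) F + FNP (R x) F"
      unfolding S_def C_def count_A[OF finF] count_A[OF N(2)] threshold[OF x] unfolding m_def N_def
      by (rule FDP_add_FNP_threshold_ge[OF F])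
  qed (use int_S int_C int_FDP int_FNP in auto)
  also have "\<dots> = expectation (\<lambda>x. FDP (R x) F) + expectation (\<lambda>x. FNP (R x) F)"
    using int_FDP int_FNP by simp
  finally show ?thesis unfolding m_def N_def .
qed

lemma integral_data_dist_FDP_add_FNP_ge:
  assumes F: "F \<subseteq> {..<n}" "F \<noteq> {}" and nulls: "{..<n} - F \<noteq> {}"
    and threshold: "\<And>x. x \<in> {..<n} \<rightarrow>\<^sub>E (UNIV::real set) \<Longrightarrow> Rn x = {i. i < n \<and> \<tau> x \<le> x i}"
    and meas: "Rn \<in> measurable (PiM {..<n} (\<lambda>_. borel :: real measure)) (count_space UNIV)"
    and p_pos: "measure (density lborel (normal_density 0 1)) {x. t \<le> x} > 0"
  shows "1 - measure (density lborel (normal_density (sqrt (2 * r * ln (real n))) 1)) {x. t \<le> x}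
           - (4 + 2 * real (card F))
             / (real (card ({..<n} - F)) * measure (density lborel (normal_density 0 1)) {x. t \<le> x})
         \<le> (\<integral>x. FDP (Rn x) F \<partial>data_dist r n F) + (\<integral>x. FNP (Rn x) F \<partial>data_dist r n F)"
proof -
  interpret prob_space "data_dist r n F" by (rule prob_space_data_dist)
  show ?thesis
  proof (rule expectation_FDP_add_FNP_ge[where X="\<lambda>x. x" and \<tau>=\<tau>])
    show "{x\<in>space (data_dist r n F). t \<le> x i} \<in> events" if "i < n" for i
      unfolding sets_data_dist sets_eq_imp_space_eq[OF sets_data_dist]
      using that by (intro sets_Collect_single') auto
    show "Rn \<in> measurable (data_dist r n F) (count_space UNIV)"
      using meas by (subst measurable_cong_sets[OF sets_data_dist refl])
    show "Rn x = {i. i < n \<and> \<tau> x \<le> x i}" if "x \<in> space (data_dist r n F)" for x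
      using that by (intro threshold) (simp add: space_data_dist)
  qed (use F nulls p_pos prob_data_dist_coord_ge[of _ n r F t] prob_data_dist_two_coords_ge[of _ n _ r F t]
       in \<open>auto simp: mu_def\<close>)
qed

lemma FDR_add_FNR_ge:
  assumes m: "1 \<le> m_of \<beta> n" "m_of \<beta> n < n"
    and threshold: "\<And>x. x \<in> {..<n} \<rightarrow>\<^sub>E (UNIV::real set) \<Longrightarrow> Rn x = {i. i < n \<and> \<tau> x \<le> x i}"
    and meas: "Rn \<in> measurable (PiM {..<n} (\<lambda>_. borel :: real measure)) (count_space UNIV)"
    and p_pos: "measure (density lborel (normal_density 0 1)) {x. t \<le> x} > 0"
  shows "1 - measure (density lborel (normal_density (sqrt (2 * r * ln (real n))) 1)) {x. t \<le> x}
           - (4 + 2 * real (m_of \<beta> n))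
             / ((real n - real (m_of \<beta> n)) * measure (density lborel (normal_density 0 1)) {x. t \<le> x})
         \<le> FDR \<beta> r n Rn + FNR \<beta> r n Rn"
    (is "?B \<le> _")
proof -
  define S where "S = {F. F \<subseteq> {..<n} \<and> card F = m_of \<beta> n}"
  have fin_S: "finite S" unfolding S_def by (rule finite_subset[of _ "Pow {..<n}"]) auto
  have "{..<m_of \<beta> n} \<in> S" unfolding S_def using m by auto
  then have "S \<noteq> {}" by blast
  then have set_support: "set_pmf (support_dist \<beta> n) = S"
    unfolding support_dist_def S_def[symmetric] using fin_S by simp
  have int: "integrable (measure_pmf (support_dist \<beta> n)) h" for h :: "nat set \<Rightarrow> real"
    by (rule integrable_measure_pmf_finite) (simp add: set_support fin_S)
  have "?B \<le> measure_pmf.expectation (support_dist \<beta> n)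
              (\<lambda>F. (\<integral>x. FDP (Rn x) F \<partial>data_dist r n F) + (\<integral>x. FNP (Rn x) F \<partial>data_dist r n F))"
  proof (intro measure_pmf.integral_ge_const int AE_pmfI)
    fix F assume "F \<in> set_pmf (support_dist \<beta> n)"
    then have F: "F \<subseteq> {..<n}" "card F = m_of \<beta> n" by (auto simp: set_support S_def)
    then have card_nulls: "card ({..<n} - F) = n - m_of \<beta> n"
      by (simp add: card_Diff_subset finite_subset)
    then have nulls: "{..<n} - F \<noteq> {}" using m by (metis card.empty diff_is_0_eq leD)
    have "F \<noteq> {}" using F m by auto
    then show "?B \<le> (\<integral>x. FDP (Rn x) F \<partial>data_dist r n F) + (\<integral>x. FNP (Rn x) F \<partial>data_dist r n F)"
      using integral_data_dist_FDP_add_FNP_ge[OF F(1) _ nulls threshold meas p_pos, of r] F m card_nulls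
      by (simp add: of_nat_diff)
  qed
  also have "\<dots> = FDR \<beta> r n Rn + FNR \<beta> r n Rn"
    unfolding FDR_def FNR_def using int by simp
  finally show ?thesis .
qed

lemma m_of_bounds:
  assumes "0 < \<beta>" "\<beta> < 1" "1 \<le> n"
  shows "1 \<le> m_of \<beta> n" "real (m_of \<beta> n) \<le> real n powr (1 - \<beta>)"
proof -
  have "real n powr (1 - \<beta>) \<ge> 1" using assms by (intro ge_one_powr_ge_zero) auto
  then show "1 \<le> m_of \<beta> n" by (simp add: m_of_def le_nat_iff one_le_floor)
  show "real (m_of \<beta> n) \<le> real n powr (1 - \<beta>)"
    using \<open>real n powr (1 - \<beta>) \<ge> 1\<close> of_int_floor_le[of "real n powr (1 - \<beta>)"]
    by (simp add: m_of_def)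
qed

lemma FDR_add_FNR_ge_explicit:
  assumes \<beta>: "0 < \<beta>" "\<beta> < 1" and c: "0 \<le> r" "r < c"
    and n: "2 \<le> n" "real n powr (1 - \<beta>) \<le> real n / 2"
    and threshold: "\<And>x. x \<in> {..<n} \<rightarrow>\<^sub>E (UNIV::real set) \<Longrightarrow> Rn x = {i. i < n \<and> \<tau> x \<le> x i}"
    and meas: "Rn \<in> measurable (PiM {..<n} (\<lambda>_. borel :: real measure)) (count_space UNIV)"
  shows "1 - 1 / ((sqrt (2 * c) - sqrt (2 * r))\<^sup>2 * ln (real n))
           - 12 * sqrt (2 * pi) * real n powr (1 - \<beta>)
             * exp (c * ln (real n) + sqrt (2 * c * ln (real n)) + 1 / 2) / real n
         \<le> FDR \<beta> r n Rn + FNR \<beta> r n Rn"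
proof -
  define L where "L = ln (real n)"
  define t where "t = sqrt (2 * c * L)"
  define m where "m = real (m_of \<beta> n)"
  define P where "P = measure (density lborel (normal_density 0 1)) {x. t \<le> x}"
  define \<phi> where "\<phi> = normal_density 0 1 (t + 1)"
  have L_pos: "L > 0" and n_pos: "real n > 0" using n by (auto simp: L_def)
  have "c > 0" using c by linarith
  then have t_nonneg: "t \<ge> 0" and t_sq: "t\<^sup>2 = 2 * c * L"
    using L_pos by (auto simp: t_def)
  have m: "1 \<le> m" "m \<le> real n powr (1 - \<beta>)"
    using m_of_bounds[OF \<beta>, of n] n by (auto simp: m_def)
  have \<phi>: "0 < \<phi>" "\<phi> \<le> P"
    using normal_density_le_std_normal_tail[OF t_nonneg] by (auto simp: \<phi>_def P_def normal_density_pos)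
  define d where "d = (sqrt (2 * c) - sqrt (2 * r)) * sqrt L"
  have d_pos: "d > 0" using c L_pos by (simp add: d_def)
  have "t = sqrt (2 * r * L) + d"
    by (simp add: t_def d_def real_sqrt_mult algebra_simps)
  then have "measure (density lborel (normal_density (sqrt (2 * r * L)) 1)) {x. t \<le> x} \<le> 1 / d\<^sup>2"
    using normal_tail_le_inverse_square[OF d_pos] by simp
  also have "\<dots> = 1 / ((sqrt (2 * c) - sqrt (2 * r))\<^sup>2 * L)"
    using L_pos by (simp add: d_def power_mult_distrib)
  finally have signal_tail: "measure (density lborel (normal_density (sqrt (2 * r * L)) 1)) {x. t \<le> x}
      \<le> 1 / ((sqrt (2 * c) - sqrt (2 * r))\<^sup>2 * L)" .
  have "(4 + 2 * m) / ((real n - m) * P) \<le> (6 * m) / ((real n / 2) * \<phi>)"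
    using m n \<phi> by (intro frac_le mult_mono) auto
  also have "\<dots> \<le> 12 * real n powr (1 - \<beta>) / (real n * \<phi>)"
    using m n_pos \<phi> by (simp add: divide_right_mono)
  also have "\<dots> = 12 * sqrt (2 * pi) * real n powr (1 - \<beta>) * exp (c * L + t + 1 / 2) / real n"
    unfolding \<phi>_def std_normal_density_add_1 t_sq by (simp add: exp_minus field_simps)
  finally have null_term: "(4 + 2 * m) / ((real n - m) * P)
      \<le> 12 * sqrt (2 * pi) * real n powr (1 - \<beta>) * exp (c * L + t + 1 / 2) / real n" .
  have "m_of \<beta> n < n" using m n by (simp add: m_def)
  with FDR_add_FNR_ge[OF _ _ threshold meas, of \<beta> t r] m \<phi>
  show ?thesis
    using signal_tail null_term by (simp add: m_def P_def L_def t_def)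
qed

theorem corollary1:
  fixes \<beta> r :: real and R :: "nat \<Rightarrow> (nat \<Rightarrow> real) \<Rightarrow> nat set"
  assumes "0 < \<beta>" "\<beta> < 1" "0 \<le> r" "r < \<beta>"
    and "\<And>n. natural_proc n (R n)"
    and "\<And>n. R n \<in> measurable (PiM {..<n} (\<lambda>_. borel :: real measure)) (count_space UNIV)"
  shows "1 \<le> liminf (\<lambda>n. ereal (FDR \<beta> r n (R n) + FNR \<beta> r n (R n)))"
proof -
  define c where "c = (r + \<beta>) / 2"
  have c: "r < c" "c < \<beta>" using assms(4) by (auto simp: c_def)
  define B where "B n = 1 - 1 / ((sqrt (2 * c) - sqrt (2 * r))\<^sup>2 * ln (real n))
    - 12 * sqrt (2 * pi) * real n powr (1 - \<beta>)
      * exp (c * ln (real n) + sqrt (2 * c * ln (real n)) + 1 / 2) / real n" for n :: nat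
  have "B \<longlonglongrightarrow> 1" unfolding B_def using assms(3) c by real_asymp
  then have "liminf (\<lambda>n. ereal (B n)) = 1"
    using lim_imp_Liminf[of sequentially "\<lambda>n. ereal (B n)" 1] by (simp add: one_ereal_def)
  moreover have "eventually (\<lambda>n. real n powr (1 - \<beta>) \<le> real n / 2) sequentially"
    using assms(1) by real_asymp
  then have "eventually (\<lambda>n. B n \<le> FDR \<beta> r n (R n) + FNR \<beta> r n (R n)) sequentially"
    using eventually_ge_at_top[of 2]
  proof eventually_elim
    case (elim n)
    obtain \<tau> where "\<forall>x \<in> {..<n} \<rightarrow>\<^sub>E (UNIV::real set). R n x = {i. i < n \<and> \<tau> x \<le> x i}"
      using natural_proc_threshold[OF assms(5)] by blast
    then show ?case
      unfolding B_def using elim by (intro FDR_add_FNR_ge_explicit[OF assms(1-3) c(1) _ _ _ assms(6)]) auto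
  qed
  then have "liminf (\<lambda>n. ereal (B n)) \<le> liminf (\<lambda>n. ereal (FDR \<beta> r n (R n) + FNR \<beta> r n (R n)))"
    by (intro Liminf_mono) simp
  ultimately show ?thesis by simp
qed

end
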